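(* Let $s\in\mathscr S_+^\circ$, let $d=\min\{i\in\omega: s_i=0\}$, and let $s^+\in\mathscr S_+$ be defined by $\operatorname{supp}(s^+)=\operatorname{supp}(s)\cup\{d\}$. Then $s^+\in\mathscr S_+^\circ$, $s\prec s^+$, and $\mathfrak d(s^+)=\mathfrak d(s)+1$.
   Context: $\omega=\{0,1,\dots\}$, $[m]=\{1,\dots,m\}$. A finite sign sequence is $s\in\{-,0,+\}^\omega$ with finitely many nonzero entries; $\mathscr S$ their set; $\operatorname{supp}(s)=\{i:s_i\ne0\}$; $\mathscr S_+=\mathscr S\cap\{0,+\}^\omega$. $\mathrm{SC}(t)$ = number of pairs $i<j$ with $\{t_i,t_j\}=\{-,+\}$ and $t_k=0$ for $i<k<j$. $\mathfrak d(s)=\max\{\mathrm{SC}(t):t\in\mathscr S,\ t_i\in\{-,0,s_i\}\ \forall i\}$. $\mathscr S_+^\circ=\{s\in\mathscr S_+:\mathfrak d(s)=\#\operatorname{supp}(s)\}$. Interval decomposition of $s\in\mathscr S_+$: $\operatorname{supp}(s)=X_0\amalg\cdots\amalg X_k$ into intervals with $0\in X_0$ if $0\in\operatorname{supp}(s)$ else $X_0=\emptyset$, $X_i\neq\emptyset$ for $i\in[k]$, $\min X_i-\max X_{i-1}\ge2$ ($\max\emptyset=-\infty$). $\lfloor X_i\rfloor=\{\min X_i-1\}\amalg X_i$ if $\#X_i$ odd, else $X_i$; $\lceil X_i\rceil=X_i\amalg\{\max X_i+1\}$ if $\#X_i$ odd, else $X_i$; $\operatorname{supp}(\lfloor s\rfloor)=X_0\amalg\lfloor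 X_1\rfloor\amalg\cdots\amalg\lfloor X_k\rfloor$, $\operatorname{supp}(\lceil s\rceil)=X_0\amalg\lceil X_1\rceil\amalg\cdots\amalg\lceil X_k\rceil$. On $\mathscr S_+^\circ$: $s\preceq_0 s'$ iff, with supports $\{d_1>\cdots>d_m\}$, $\{d'_1>\cdots>d'_{m'}\}$, $m\le m'$ and $d_i\le d'_i$ for $i\in[m]$. On $\mathscr S_+$: $s\preceq s'$ iff $s=s'$, or $s\ne s'$ and $\lceil s\rceil\preceq_0\lfloor s'\rfloor$; $s\prec s'$ means $s\preceq s'$, $s\ne s'$. *)

theory Defs
  imports Main
begin

datatype sign = Neg | Zero | Pos

definition ssupp :: "(nat \<Rightarrow> sign) \<Rightarrow> nat set" where
  "ssupp s = {i. s i \<noteq> Zero}"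

definition SS :: "(nat \<Rightarrow> sign) set" where
  "SS = {s. finite (ssupp s)}"

definition SSplus :: "(nat \<Rightarrow> sign) set" where
  "SSplus = {s. s \<in> SS \<and> (\<forall>i. s i \<in> {Zero, Pos})}"

definition SC :: "(nat \<Rightarrow> sign) \<Rightarrow> nat" where
  "SC t = card {(i, j). i < j \<and> {t i, t j} = {Neg, Pos} \<and> (\<forall>k. i < k \<and> k < j \<longrightarrow> t k = Zero)}"

definition dd :: "(nat \<Rightarrow> sign) \<Rightarrow> nat" where
  "dd s = Max {SC t | t. t \<in> SS \<and> (\<forall>i. t i \<in> {Neg, Zero, s i})}"

definition SSplus_circ :: "(nat \<Rightarrow> sign) set" where
  "SSplus_circ = {s. s \<in> SSplus \<and> dd s = card (ssupp s)}"

definition is_block :: "nat set \<Rightarrow> nat \<Rightarrow> nat \<Rightarrow> bool" where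
  "is_block A a b \<longleftrightarrow> a \<le> b \<and> {a..b} \<subseteq> A \<and> (a = 0 \<or> a - 1 \<notin> A) \<and> Suc b \<notin> A"

(* blocks X_i with i \<ge> 1 are exactly the blocks with min > 0; X_0 is the block starting at 0 *)
definition floor_supp :: "nat set \<Rightarrow> nat set" where
  "floor_supp A = A \<union> {a - 1 | a b. is_block A a b \<and> 0 < a \<and> odd (card {a..b})}"

definition ceil_supp :: "nat set \<Rightarrow> nat set" where
  "ceil_supp A = A \<union> {Suc b | a b. is_block A a b \<and> 0 < a \<and> odd (card {a..b})}"

definition seq_of_supp :: "nat set \<Rightarrow> (nat \<Rightarrow> sign)" where
  "seq_of_supp A = (\<lambda>i. if i \<in> A then Pos else Zero)"

definition sfloor :: "(nat \<Rightarrow> sign) \<Rightarrow> (nat \<Rightarrow> sign)" where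
  "sfloor s = seq_of_supp (floor_supp (ssupp s))"

definition sceil :: "(nat \<Rightarrow> sign) \<Rightarrow> (nat \<Rightarrow> sign)" where
  "sceil s = seq_of_supp (ceil_supp (ssupp s))"

definition le0 :: "(nat \<Rightarrow> sign) \<Rightarrow> (nat \<Rightarrow> sign) \<Rightarrow> bool" where
  "le0 s s' \<longleftrightarrow>
     (let L = rev (sorted_list_of_set (ssupp s)); L' = rev (sorted_list_of_set (ssupp s'))
      in length L \<le> length L' \<and> (\<forall>i < length L. L ! i \<le> L' ! i))"

definition sle :: "(nat \<Rightarrow> sign) \<Rightarrow> (nat \<Rightarrow> sign) \<Rightarrow> bool" where
  "sle s s' \<longleftrightarrow> s = s' \<or> (s \<noteq> s' \<and> le0 (sceil s) (sfloor s'))"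

definition sprec :: "(nat \<Rightarrow> sign) \<Rightarrow> (nat \<Rightarrow> sign) \<Rightarrow> bool" where
  "sprec s s' \<longleftrightarrow> sle s s' \<and> s \<noteq> s'"

end

theory Submission
  imports Defs
begin

text \<open>A sign pattern alternating along the blocks of the support and negative on the gaps
  gives \<open>card (ssupp s) \<le> dd s\<close> for every \<open>s \<in> SSplus\<close>, strictly if some block not
  starting at 0 has odd length. So for \<open>s \<in> SSplus_circ\<close> these blocks are even,
  \<open>sceil s = s\<close>, and \<open>s \<prec> s\<^sup>+\<close> because \<open>le0\<close> is monotone under inclusion of supports.
  An optimal pattern \<open>t\<close> for \<open>s\<^sup>+\<close> with \<open>t d = Pos\<close> becomes admissible for \<open>s\<close> after
  flipping all signs on \<open>{..d}\<close> (all of \<open>{..<d}\<close> lies in the support), which loses at most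
  the sign change starting at \<open>d\<close>. Hence \<open>dd s\<^sup>+ \<le> dd s + 1 = card (ssupp s\<^sup>+) \<le> dd s\<^sup>+\<close>.\<close>

lemma ssupp_seq_of_supp [simp]: "ssupp (seq_of_supp A) = A"
  by (auto simp: ssupp_def seq_of_supp_def)

lemma seq_of_supp_in_SSplus: "finite A \<Longrightarrow> seq_of_supp A \<in> SSplus"
  by (simp add: SSplus_def SS_def) (simp add: seq_of_supp_def)

lemma SSplus_Pos_iff:
  assumes "s \<in> SSplus"
  shows "s i = Pos \<longleftrightarrow> i \<in> ssupp s"
proof -
  have "s i \<in> {Zero, Pos}" using assms by (simp add: SSplus_def)
  then show ?thesis by (auto simp: ssupp_def)
qed

lemma SSplus_eq_seq_of_supp:
  assumes "s \<in> SSplus"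
  shows "seq_of_supp (ssupp s) = s"
proof
  fix i
  have "s i \<in> {Zero, Pos}" using assms by (simp add: SSplus_def)
  then show "seq_of_supp (ssupp s) i = s i" by (auto simp: seq_of_supp_def ssupp_def)
qed

definition sign_changes :: "(nat \<Rightarrow> sign) \<Rightarrow> (nat \<times> nat) set" where
  "sign_changes t = {(i, j). i < j \<and> {t i, t j} = {Neg, Pos} \<and> (\<forall>k. i < k \<and> k < j \<longrightarrow> t k = Zero)}"

lemma SC_eq_card_sign_changes: "SC t = card (sign_changes t)"
  by (simp add: SC_def sign_changes_def)

lemma mem_sign_changes_iff:
  "(i, j) \<in> sign_changes t \<longleftrightarrow>
     i < j \<and> t i \<noteq> Zero \<and> t j \<noteq> Zero \<and> t i \<noteq> t j \<and> (\<forall>k. i < k \<and> k < j \<longrightarrow> t k = Zero)"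
  by (cases "t i"; cases "t j") (auto simp: sign_changes_def doubleton_eq_iff)

lemma sign_changes_right_unique:
  "(i, j) \<in> sign_changes t \<Longrightarrow> (i, j') \<in> sign_changes t \<Longrightarrow> j = j'"
  by (metis linorder_neqE_nat mem_sign_changes_iff)

lemma sign_changes_left_unique:
  "(i, j) \<in> sign_changes t \<Longrightarrow> (i', j) \<in> sign_changes t \<Longrightarrow> i = i'"
  by (metis linorder_neqE_nat mem_sign_changes_iff)

lemma finite_sign_changes: "t \<in> SS \<Longrightarrow> finite (sign_changes t)"
proof -
  assume "t \<in> SS"
  then have "finite (ssupp t \<times> ssupp t)" by (simp add: SS_def)
  moreover have "sign_changes t \<subseteq> ssupp t \<times> ssupp t"
    by (auto simp: mem_sign_changes_iff ssupp_def)
  ultimately show ?thesis by (rule finite_subset[rotated])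
qed

text \<open>Every sign change has a \<open>Pos\<close> end, and it is determined by that end.\<close>

lemma SC_le_twice_card_Pos:
  assumes "t \<in> SS"
  shows "SC t \<le> 2 * card {i. t i = Pos}"
proof -
  define P where "P = {i. t i = Pos}"
  define L where "L = {x \<in> sign_changes t. t (fst x) = Pos}"
  define R where "R = {x \<in> sign_changes t. t (snd x) = Pos}"
  have "P \<subseteq> ssupp t" by (auto simp: P_def ssupp_def)
  then have "finite P" using assms by (auto simp: SS_def intro: finite_subset)
  have "sign_changes t = L \<union> R"
    by (auto simp: L_def R_def mem_sign_changes_iff) (metis sign.exhaust)
  moreover have "card L \<le> card P"
    using \<open>finite P\<close> sign_changes_right_unique[of _ _ t]
    by (intro card_inj_on_le[of fst]) (auto simp: L_def P_def inj_on_def)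
  moreover have "card R \<le> card P"
    using \<open>finite P\<close> sign_changes_left_unique[of _ _ t]
    by (intro card_inj_on_le[of snd]) (auto simp: R_def P_def inj_on_def)
  ultimately show ?thesis
    unfolding SC_eq_card_sign_changes P_def[symmetric] using card_Un_le[of L R] by simp
qed

definition admissible :: "(nat \<Rightarrow> sign) \<Rightarrow> (nat \<Rightarrow> sign) \<Rightarrow> bool" where
  "admissible s t \<longleftrightarrow> t \<in> SS \<and> (\<forall>i. t i \<in> {Neg, Zero, s i})"

lemma dd_eq_Max_admissible: "dd s = Max (SC ` {t. admissible s t})"
  unfolding dd_def admissible_def by (simp add: image_def) (metis)

lemma finite_SC_admissible:
  assumes "s \<in> SSplus"
  shows "finite (SC ` {t. admissible s t})"
proof -
  have "SC t \<le> 2 * card (ssupp s)" if "admissible s t" for t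
  proof -
    have "{i. t i = Pos} \<subseteq> ssupp s"
    proof
      fix i assume "i \<in> {i. t i = Pos}"
      moreover have "t i \<in> {Neg, Zero, s i}" using that by (simp add: admissible_def)
      ultimately show "i \<in> ssupp s" by (auto simp: ssupp_def)
    qed
    then have "card {i. t i = Pos} \<le> card (ssupp s)"
      using assms by (intro card_mono) (auto simp: SSplus_def SS_def)
    then show ?thesis using SC_le_twice_card_Pos that by (fastforce simp: admissible_def)
  qed
  then have "SC ` {t. admissible s t} \<subseteq> {..2 * card (ssupp s)}" by auto
  then show ?thesis by (rule finite_subset) simp
qed

lemma SC_le_dd: "s \<in> SSplus \<Longrightarrow> admissible s t \<Longrightarrow> SC t \<le> dd s"
  unfolding dd_eq_Max_admissible by (auto intro: Max_ge finite_SC_admissible)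

lemma dd_attained:
  assumes "s \<in> SSplus"
  obtains t where "admissible s t" and "SC t = dd s"
proof -
  have "admissible s (\<lambda>_. Zero)" by (simp add: admissible_def SS_def ssupp_def)
  then have "dd s \<in> SC ` {t. admissible s t}"
    unfolding dd_eq_Max_admissible using finite_SC_admissible[OF assms] by (intro Max_in) auto
  then show ?thesis using that by auto
qed

lemma nth_filter_le:
  fixes xs :: "'a :: linorder list"
  assumes "sorted_wrt (\<ge>) xs" and "i < length (filter P xs)"
  shows "filter P xs ! i \<le> xs ! i"
  using assms
proof (induction xs arbitrary: i)
  case (Cons x xs)
  have sorted: "sorted_wrt (\<ge>) xs" and x_max: "\<forall>y \<in> set xs. y \<le> x"
    using Cons.prems(1) by simp_all
  show ?case
  proof (cases "P x")
    case True
    show ?thesis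
    proof (cases i)
      case (Suc k)
      then have "k < length (filter P xs)" using Cons.prems(2) True by simp
      then show ?thesis using Cons.IH[OF sorted] Suc True by simp
    qed (simp add: True)
  next
    case False
    then have i: "i < length (filter P xs)" using Cons.prems(2) by simp
    then have "i < length xs" using length_filter_le[of P xs] by linarith
    have "filter P xs ! i \<le> xs ! i" using Cons.IH[OF sorted i] .
    also have "xs ! i \<le> (x # xs) ! i"
    proof (cases i)
      case 0 then show ?thesis using x_max \<open>i < length xs\<close> by simp
    next
      case (Suc k)
      then show ?thesis using sorted \<open>i < length xs\<close> sorted_wrt_nth_less[of "(\<ge>)" xs k i] by simp
    qed
    finally show ?thesis using False by simp
  qed
qed simp

lemma sorted_list_of_set_subset:
  assumes "finite B" and "A \<subseteq> B"
  shows "sorted_list_of_set A = filter (\<lambda>x. x \<in> A) (sorted_list_of_set B)"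
proof -
  have "finite A" using assms finite_subset by blast
  then show ?thesis using assms
    by (intro sorted_list_of_set_unique[THEN iffD1] conjI)
      (auto intro: sorted_wrt_filter simp: distinct_length_filter Int_absorb2)
qed

lemma le0_seq_of_supp_mono:
  assumes "finite B" and "A \<subseteq> B"
  shows "le0 (seq_of_supp A) (seq_of_supp B)"
proof -
  define L where "L = rev (sorted_list_of_set B)"
  have "rev (sorted_list_of_set A) = filter (\<lambda>x. x \<in> A) L"
    using sorted_list_of_set_subset[OF assms] by (simp add: L_def rev_filter)
  moreover have "sorted_wrt (\<ge>) L" by (simp add: L_def sorted_wrt_rev)
  ultimately show ?thesis
    unfolding le0_def Let_def ssupp_seq_of_supp L_def[symmetric] by (auto intro: nth_filter_le)
qed

definition block_end :: "nat set \<Rightarrow> nat \<Rightarrow> nat" where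
  "block_end A i = (LEAST j. i \<le> j \<and> j \<notin> A)"

lemma block_end_eq:
  assumes "a \<le> b" and "{a..b} \<subseteq> A" and "Suc b \<notin> A"
  shows "block_end A a = Suc b"
  unfolding block_end_def
proof (rule Least_equality)
  show "a \<le> Suc b \<and> Suc b \<notin> A" using assms by simp
next
  fix j assume "a \<le> j \<and> j \<notin> A"
  with assms(2) have "j \<notin> {a..b}" by blast
  with \<open>a \<le> j \<and> j \<notin> A\<close> show "Suc b \<le> j" by simp
qed

lemma block_end_Suc:
  assumes "i \<in> A"
  shows "block_end A (Suc i) = block_end A i"
proof -
  have "(Suc i \<le> j \<and> j \<notin> A) \<longleftrightarrow> (i \<le> j \<and> j \<notin> A)" for j
    using assms by (cases "j = i") auto
  then show ?thesis unfolding block_end_def by simp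
qed

lemma le_block_end:
  assumes "A \<subseteq> {..<M}"
  shows "i \<le> block_end A i"
proof -
  have "i \<le> i + M \<and> i + M \<notin> A" using assms by auto
  then have "i \<le> block_end A i \<and> block_end A i \<notin> A" unfolding block_end_def by (rule LeastI)
  then show ?thesis ..
qed

text \<open>Along each block of \<open>A\<close> the signs alternate and end with \<open>Pos\<close>; all gaps below
  \<open>M\<close> are \<open>Neg\<close>. So each \<open>i \<in> A\<close> starts a sign change \<open>(i, i + 1)\<close>, and a block of odd
  length after a gap starts with \<open>Pos\<close>, giving one more.\<close>

definition alternating_witness :: "nat set \<Rightarrow> nat \<Rightarrow> nat \<Rightarrow> sign" where
  "alternating_witness A M i =
     (if i \<in> A then if odd (block_end A i - i) then Pos else Neg
      else if i \<le> M then Neg else Zero)"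

lemma alternating_witness_in_SS: "A \<subseteq> {..<M} \<Longrightarrow> alternating_witness A M \<in> SS"
proof -
  assume "A \<subseteq> {..<M}"
  then have "ssupp (alternating_witness A M) \<subseteq> {..M}"
    by (auto simp: ssupp_def alternating_witness_def split: if_splits)
  then show ?thesis unfolding SS_def by (auto intro: finite_subset)
qed

lemma admissible_alternating_witness:
  assumes "s \<in> SSplus" and "ssupp s \<subseteq> {..<M}"
  shows "admissible s (alternating_witness (ssupp s) M)"
proof -
  have "alternating_witness (ssupp s) M i \<in> {Neg, Zero, s i}" for i
    using SSplus_Pos_iff[OF assms(1), of i] by (auto simp: alternating_witness_def)
  then show ?thesis using alternating_witness_in_SS[OF assms(2)] by (simp add: admissible_def)
qed

lemma alternating_witness_sign_change:
  assumes M: "A \<subseteq> {..<M}" and "i \<in> A"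
  shows "(i, Suc i) \<in> sign_changes (alternating_witness A M)"
proof (cases "Suc i \<in> A")
  case True
  have "Suc i \<le> block_end A (Suc i)" by (rule le_block_end[OF M])
  then show ?thesis
    using True \<open>i \<in> A\<close> block_end_Suc[OF \<open>i \<in> A\<close>]
    by (auto simp: mem_sign_changes_iff alternating_witness_def Suc_diff_Suc Suc_le_lessD)
next
  case False
  have "i < M" using M \<open>i \<in> A\<close> by auto
  then show ?thesis
    using False \<open>i \<in> A\<close> block_end_eq[of i i A]
    by (auto simp: mem_sign_changes_iff alternating_witness_def)
qed

lemma alternating_witness_odd_block_sign_change:
  assumes M: "A \<subseteq> {..<M}" and "is_block A a b" and "0 < a" and "odd (card {a..b})"
  shows "(a - 1, a) \<in> sign_changes (alternating_witness A M)"
proof -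
  have "a \<in> A" and "a - 1 \<notin> A" and "a < M" using assms by (auto simp: is_block_def)
  moreover have "block_end A a = Suc b"
    using assms(2) block_end_eq by (auto simp: is_block_def)
  ultimately show ?thesis
    using assms by (auto simp: mem_sign_changes_iff alternating_witness_def)
qed

lemma card_le_SC_alternating_witness:
  assumes M: "A \<subseteq> {..<M}"
  shows "card A \<le> SC (alternating_witness A M)"
    and "is_block A a b \<Longrightarrow> 0 < a \<Longrightarrow> odd (card {a..b}) \<Longrightarrow>
           card A < SC (alternating_witness A M)"
proof -
  define C where "C = sign_changes (alternating_witness A M)"
  have "finite A" and "finite C"
    using M alternating_witness_in_SS[OF M] finite_sign_changes
    by (auto simp: C_def intro: finite_subset)
  have img: "(\<lambda>i. (i, Suc i)) ` A \<subseteq> C"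
    using alternating_witness_sign_change[OF M] by (auto simp: C_def)
  have card_img: "card ((\<lambda>i. (i, Suc i)) ` A) = card A"
    by (rule card_image) (auto simp: inj_on_def)
  show "card A \<le> SC (alternating_witness A M)"
    using card_mono[OF \<open>finite C\<close> img] card_img by (simp add: SC_eq_card_sign_changes C_def)
  assume block: "is_block A a b" "0 < a" "odd (card {a..b})"
  have "insert (a - 1, a) ((\<lambda>i. (i, Suc i)) ` A) \<subseteq> C"
    using img alternating_witness_odd_block_sign_change[OF M block] by (simp add: C_def)
  then have "card (insert (a - 1, a) ((\<lambda>i. (i, Suc i)) ` A)) \<le> card C"
    using \<open>finite C\<close> by (rule card_mono[rotated])
  moreover have "(a - 1, a) \<notin> (\<lambda>i. (i, Suc i)) ` A"
    using block by (auto simp: is_block_def)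
  ultimately show "card A < SC (alternating_witness A M)"
    using card_img \<open>finite A\<close> by (simp add: SC_eq_card_sign_changes C_def)
qed

lemma card_ssupp_le_dd: "s \<in> SSplus \<Longrightarrow> card (ssupp s) \<le> dd s"
proof -
  assume s: "s \<in> SSplus"
  then obtain M where M: "ssupp s \<subseteq> {..<M}"
    unfolding SSplus_def SS_def finite_nat_set_iff_bounded by auto
  show ?thesis
    using card_le_SC_alternating_witness(1)[OF M] SC_le_dd[OF s admissible_alternating_witness[OF s M]]
    by simp
qed

lemma card_ssupp_less_dd_if_odd_block:
  assumes s: "s \<in> SSplus" and "is_block (ssupp s) a b" and "0 < a" and "odd (card {a..b})"
  shows "card (ssupp s) < dd s"
proof -
  obtain M where M: "ssupp s \<subseteq> {..<M}"
    using s unfolding SSplus_def SS_def finite_nat_set_iff_bounded by auto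
  show ?thesis
    using card_le_SC_alternating_witness(2)[OF M assms(2-4)]
      SC_le_dd[OF s admissible_alternating_witness[OF s M]]
    by simp
qed

lemma ceil_supp_eq_if_SSplus_circ:
  assumes "s \<in> SSplus_circ"
  shows "ceil_supp (ssupp s) = ssupp s"
proof -
  have s: "s \<in> SSplus" and dd: "dd s = card (ssupp s)"
    using assms by (auto simp: SSplus_circ_def)
  have "\<not> (is_block (ssupp s) a b \<and> 0 < a \<and> odd (card {a..b}))" for a b
    using card_ssupp_less_dd_if_odd_block[OF s, of a b] dd by linarith
  then show ?thesis unfolding ceil_supp_def by blast
qed

fun flip_sign :: "sign \<Rightarrow> sign" where
  "flip_sign Neg = Pos" | "flip_sign Zero = Zero" | "flip_sign Pos = Neg"

lemma flip_sign_eq_Zero_iff [simp]: "flip_sign x = Zero \<longleftrightarrow> x = Zero"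
  by (cases x) auto

lemma flip_sign_eq_iff [simp]: "flip_sign x = flip_sign y \<longleftrightarrow> x = y"
  by (cases x; cases y) auto

text \<open>Flipping all signs up to a nonzero position \<open>d\<close> keeps every sign change except
  the one starting at \<open>d\<close>.\<close>

lemma SC_le_Suc_SC_flip_prefix:
  assumes "t \<in> SS" and "t d \<noteq> Zero"
  shows "SC t \<le> Suc (SC (\<lambda>i. if i \<le> d then flip_sign (t i) else t i))"
proof -
  define t' where "t' = (\<lambda>i. if i \<le> d then flip_sign (t i) else t i)"
  define D where "D = {x \<in> sign_changes t. fst x = d}"
  have "t' \<in> SS" using assms(1) by (simp add: SS_def ssupp_def t'_def)
  have "sign_changes t \<subseteq> sign_changes t' \<union> D"
  proof
    fix x assume x: "x \<in> sign_changes t"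
    obtain i j where ij: "x = (i, j)" by fastforce
    consider "j \<le> d" | "d < i" | "i = d" | "i < d" "d < j" by linarith
    then show "x \<in> sign_changes t' \<union> D"
    proof cases
      case 3 then show ?thesis using x ij by (simp add: D_def)
    next
      case 4 then show ?thesis using x ij assms(2) by (auto simp: mem_sign_changes_iff)
    qed (use x ij in \<open>auto simp: mem_sign_changes_iff t'_def\<close>)
  qed
  moreover have "card D \<le> Suc 0"
    using finite_sign_changes[OF assms(1)]
    by (subst card_le_Suc0_iff_eq) (auto simp: D_def dest: sign_changes_right_unique)
  ultimately have "card (sign_changes t) \<le> card (sign_changes t') + 1"
    using finite_sign_changes[OF \<open>t' \<in> SS\<close>] finite_sign_changes[OF assms(1)]
      card_mono[of "sign_changes t' \<union> D"] card_Un_le[of "sign_changes t'" D]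
    by (fastforce simp: D_def)
  then show ?thesis by (simp add: SC_eq_card_sign_changes t'_def)
qed

lemma dd_insert_le:
  assumes s: "s \<in> SSplus" and below: "\<forall>i<d. i \<in> ssupp s"
  shows "dd (seq_of_supp (insert d (ssupp s))) \<le> Suc (dd s)"
proof -
  define s' where "s' = seq_of_supp (insert d (ssupp s))"
  have "s' \<in> SSplus"
    unfolding s'_def using s by (intro seq_of_supp_in_SSplus) (simp add: SSplus_def SS_def)
  then obtain t where t: "admissible s' t" and "SC t = dd s'" by (rule dd_attained)
  have s'_eq: "s' i = s i" if "i \<noteq> d" for i
    using that by (subst SSplus_eq_seq_of_supp[OF s, symmetric]) (simp add: s'_def seq_of_supp_def)
  show ?thesis
  proof (cases "t d = Pos")
    case False
    then have "admissible s t" using t s'_eq by (auto simp: admissible_def) (metis sign.exhaust)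
    then show ?thesis using SC_le_dd[OF s] \<open>SC t = dd s'\<close> s'_def by fastforce
  next
    case True
    define t' where "t' = (\<lambda>i. if i \<le> d then flip_sign (t i) else t i)"
    have "t' \<in> SS" using t by (simp add: admissible_def SS_def ssupp_def t'_def)
    moreover have "t' i \<in> {Neg, Zero, s i}" for i
    proof -
      consider "i < d" | "i = d" | "d < i" by linarith
      then show ?thesis
      proof cases
        case 1 then show ?thesis using below SSplus_Pos_iff[OF s, of i] by (cases "t' i") auto
      next
        case 2 then show ?thesis using True by (simp add: t'_def)
      next
        case 3 then show ?thesis using t s'_eq[of i] by (auto simp: admissible_def t'_def)
      qed
    qed
    ultimately have "SC t' \<le> dd s" using SC_le_dd[OF s] by (simp add: admissible_def)
    moreover have "SC t \<le> Suc (SC t')"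
      using SC_le_Suc_SC_flip_prefix[of t d] t True by (simp add: admissible_def t'_def)
    ultimately show ?thesis using \<open>SC t = dd s'\<close> s'_def by simp
  qed
qed

lemma finite_floor_supp: "finite A \<Longrightarrow> finite (floor_supp A)"
proof -
  assume "finite A"
  moreover have "floor_supp A \<subseteq> A \<union> (\<lambda>a. a - 1) ` A"
    unfolding floor_supp_def is_block_def by (auto 0 3 simp del: card_atLeastAtMost)
  ultimately show ?thesis by (auto intro: finite_subset)
qed

lemma sprec_insert_ssupp:
  assumes "s \<in> SSplus_circ" and "d \<notin> ssupp s"
  shows "sprec s (seq_of_supp (insert d (ssupp s)))"
proof -
  have fin: "finite (ssupp s)" using assms(1) by (simp add: SSplus_circ_def SSplus_def SS_def)
  have "sceil s = seq_of_supp (ssupp s)"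
    using ceil_supp_eq_if_SSplus_circ[OF assms(1)] by (simp add: sceil_def)
  moreover have "le0 (seq_of_supp (ssupp s)) (sfloor (seq_of_supp (insert d (ssupp s))))"
    unfolding sfloor_def ssupp_seq_of_supp using fin
    by (intro le0_seq_of_supp_mono finite_floor_supp) (auto simp: floor_supp_def)
  moreover have "s \<noteq> seq_of_supp (insert d (ssupp s))"
    using assms(2) by (metis insertI1 ssupp_seq_of_supp)
  ultimately show ?thesis by (simp add: sprec_def sle_def)
qed

theorem mainTheorem13:
  fixes s :: "nat \<Rightarrow> sign"
  assumes "s \<in> SSplus_circ"
  defines "splus \<equiv> seq_of_supp (ssupp s \<union> {LEAST i. s i = Zero})"
  shows "splus \<in> SSplus_circ \<and> sprec s splus \<and> dd splus = dd s + 1"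
proof -
  have s: "s \<in> SSplus" and dd_s: "dd s = card (ssupp s)"
    using assms(1) by (auto simp: SSplus_circ_def)
  have fin: "finite (ssupp s)" using s by (simp add: SSplus_def SS_def)
  define d where "d = (LEAST i. s i = Zero)"
  obtain i where "i \<notin> ssupp s" using ex_new_if_finite[OF infinite_UNIV_nat fin] ..
  then have "d \<notin> ssupp s" unfolding d_def ssupp_def by (auto intro: LeastI)
  have below: "\<forall>i<d. i \<in> ssupp s" unfolding d_def ssupp_def using not_less_Least by blast
  have splus: "splus = seq_of_supp (insert d (ssupp s))" by (simp add: splus_def d_def)
  have "splus \<in> SSplus" using fin by (simp add: splus seq_of_supp_in_SSplus)
  have card_splus: "card (ssupp splus) = Suc (card (ssupp s))"
    using fin \<open>d \<notin> ssupp s\<close> by (simp add: splus)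
  have dd_splus: "dd splus = Suc (dd s)"
    using dd_insert_le[OF s below] card_ssupp_le_dd[OF \<open>splus \<in> SSplus\<close>] card_splus dd_s
    by (simp add: splus)
  show ?thesis
    using \<open>splus \<in> SSplus\<close> dd_splus card_splus dd_s sprec_insert_ssupp[OF assms(1) \<open>d \<notin> ssupp s\<close>]
    by (simp add: SSplus_circ_def splus)
qed

end
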